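(* Let $\mathcal{C}$ be an $[n,k]_q$ code and fix $i\in\{1,\dots,q-1\}$. There exists a non-zero vector $r=(r_1,\dots,r_{q-1})\in\mathbb{N}^{q-1}$ such that $$\sum_{j=1}^{q-1} r_j\left(a[\alpha^{i-j}]-b[\alpha^{i-j}]\right)\neq 0\quad\text{for all } a,b\in\mathcal{C} \text{ with } a\ne b$$ if and only if $V(a)\neq V(b)$ for all $a,b\in\mathcal{C}$ with $a\neq b$.
   Context: $q$ is a prime power, $\alpha$ a fixed primitive element of $\mathbb{F}_q$ (exponents of $\alpha$ are taken modulo $q-1$), $\mathbb{N}=\{0,1,2,\dots\}$. An $[n,k]_q$ code is a $k$-dimensional subspace of $\mathbb{F}_q^n$. For $c\in\mathbb{F}_q^n$ and $\beta\in\mathbb{F}_q$, $c[\beta]=|\{l: c_l=\beta\}|$, and $V(c)=(c[\alpha],c[\alpha^2],\dots,c[\alpha^{q-1}],c[0])$. *)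

theory Defs
  imports "HOL-Analysis.Analysis"
begin

definition primitive_elem :: "'a::{finite,field} \<Rightarrow> bool" where
  "primitive_elem \<alpha> \<longleftrightarrow> \<alpha> \<noteq> 0 \<and> (\<forall>x. x \<noteq> 0 \<longrightarrow> (\<exists>j::nat. x = \<alpha> ^ j))"

definition cnt :: "'a ^ 'n \<Rightarrow> 'a \<Rightarrow> nat" where
  "cnt c \<beta> = card {l. c $ l = \<beta>}"

definition Vvec :: "'a::{finite,field} \<Rightarrow> 'a ^ 'n \<Rightarrow> nat list" where
  "Vvec \<alpha> c = map (\<lambda>j. cnt c (\<alpha> ^ j)) [1..<CARD('a)] @ [cnt c 0]"

text \<open>An [n,k]_q code: a k-dimensional subspace of F_q^n (n = CARD('n)).\<close>
definition is_code :: "nat \<Rightarrow> ('a::field ^ 'n) set \<Rightarrow> bool" where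
  "is_code k C \<longleftrightarrow> vec.subspace C \<and> vec.dim C = k"

end

theory Submission imports Defs begin

text \<open>
  Since \<open>\<alpha>\<close> is primitive, \<open>j \<mapsto> \<alpha>\<^bsup>i-j\<^esup>\<close> maps \<open>{1..q-1}\<close> bijectively onto the nonzero
  field elements, and \<open>V(c)\<close> is determined by the counts of the nonzero elements (the count
  of \<open>0\<close> being \<open>n\<close> minus their sum). So if some weighted sum separates the code, the \<open>V\<close>-vectors
  must differ. Conversely, all count differences lie in \<open>[-n, n]\<close>, so the weights
  \<open>r\<^sub>j = (n+1)\<^bsup>j-1\<^esup>\<close> read them as the digits of a base \<open>n+1\<close> expansion, which vanishes only
  if every digit does.
\<close>

lemma sum_power_digits_nonzero:
  fixes B N :: int and d :: "nat \<Rightarrow> int"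
  assumes "N < B" and "\<forall>j<n. \<bar>d j\<bar> \<le> N" and "\<exists>j<n. d j \<noteq> 0"
  shows "(\<Sum>j<n. B ^ j * d j) \<noteq> 0"
  using assms(2,3)
proof (induction n arbitrary: d)
  case 0
  then show ?case by simp
next
  case (Suc n)
  define S where "S = (\<Sum>j<n. B ^ j * d (Suc j))"
  have split: "(\<Sum>j<Suc n. B ^ j * d j) = d 0 + B * S"
    unfolding S_def sum.lessThan_Suc_shift by (simp add: sum_distrib_left algebra_simps)
  show ?case
  proof (cases "\<exists>j<n. d (Suc j) \<noteq> 0")
    case True
    with Suc have "S \<noteq> 0" unfolding S_def by auto
    have "\<bar>d 0\<bar> \<le> N" using Suc.prems(1) by simp
    with assms(1) have "0 < B" by linarith
    from \<open>S \<noteq> 0\<close> have "B * 1 \<le> B * \<bar>S\<bar>"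
      using \<open>0 < B\<close> by (intro mult_left_mono) linarith+
    with \<open>\<bar>d 0\<bar> \<le> N\<close> show ?thesis unfolding split using assms(1) by (simp add: abs_mult)
  next
    case False
    then have "S = 0" unfolding S_def by simp
    moreover have "d 0 \<noteq> 0" using Suc.prems(2) False by (metis less_Suc_eq_0_disj)
    ultimately show ?thesis unfolding split by simp
  qed
qed

lemma cnt_le_card: "cnt c x \<le> CARD('n)" for c :: "'a ^ 'n"
  unfolding cnt_def by (rule card_mono) auto

lemma sum_cnt: "(\<Sum>x\<in>UNIV. cnt c x) = CARD('n)" for c :: "'a::finite ^ 'n"
proof -
  have "(\<Sum>x\<in>UNIV. card {l. c $ l = x}) = card (\<Union>x. {l. c $ l = x})"
    by (rule card_UN_disjoint[symmetric]) auto
  also have "(\<Union>x. {l. c $ l = x}) = UNIV" by auto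
  finally show ?thesis unfolding cnt_def .
qed

lemma cnt_zero_eq: "cnt c 0 = CARD('n) - (\<Sum>x\<in>UNIV - {0}. cnt c x)"
  for c :: "'a::{finite,zero} ^ 'n"
  using sum_cnt[of c] sum.remove[of UNIV 0 "cnt c"] by simp

lemma weighted_cnt_difference_nonzero:
  fixes a b :: "'a ^ 'n" and f :: "nat \<Rightarrow> 'a"
  assumes "\<exists>j\<in>{1..m}. cnt a (f j) \<noteq> cnt b (f j)"
  shows "(\<Sum>j = 1..m. int ((CARD('n) + 1) ^ (j - 1)) * (int (cnt a (f j)) - int (cnt b (f j)))) \<noteq> 0"
proof -
  define d where "d j = int (cnt a (f (Suc j))) - int (cnt b (f (Suc j)))" for j
  have "\<bar>d j\<bar> \<le> int CARD('n)" for j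
    using cnt_le_card[of a "f (Suc j)"] cnt_le_card[of b "f (Suc j)"] unfolding d_def by simp
  moreover obtain j where "j \<in> {1..m}" and "cnt a (f j) \<noteq> cnt b (f j)"
    using assms by blast
  then have "\<exists>j<m. d j \<noteq> 0"
    unfolding d_def by (intro exI[of _ "j - 1"]) auto
  ultimately have "(\<Sum>j<m. int (CARD('n) + 1) ^ j * d j) \<noteq> 0"
    by (intro sum_power_digits_nonzero) auto
  moreover have "(\<Sum>j = 1..m. int ((CARD('n) + 1) ^ (j - 1)) * (int (cnt a (f j)) - int (cnt b (f j))))
      = (\<Sum>j<m. int (CARD('n) + 1) ^ j * d j)"
    unfolding One_nat_def sum.atLeast1_atMost_eq d_def by simp
  ultimately show ?thesis by simp
qed

lemma card_nonzero: "card (UNIV - {0 :: 'a :: {finite,zero}}) = CARD('a) - 1"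
  by (simp add: card_Diff_singleton)

lemma card_field_ge_2: "2 \<le> CARD('a :: {finite,field})"
  using card_mono[of UNIV "{0 :: 'a, 1}"] by simp

lemma primitive_elem_nonzero: "primitive_elem \<alpha> \<Longrightarrow> \<alpha> \<noteq> 0"
  unfolding primitive_elem_def by simp

lemma primitive_elem_order:
  fixes \<alpha> :: "'a::{finite,field}"
  assumes "primitive_elem \<alpha>" and "0 < d" and "\<alpha> ^ d = 1"
  shows "CARD('a) - 1 \<le> d"
proof -
  have "UNIV - {0} \<subseteq> (\<lambda>j. \<alpha> ^ j) ` {..<d}"
  proof
    fix x :: 'a assume "x \<in> UNIV - {0}"
    then obtain j where "x = \<alpha> ^ j" using assms(1) unfolding primitive_elem_def by auto
    also have "\<alpha> ^ j = \<alpha> ^ (j mod d)"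
      by (metis assms(3) mult_div_mod_eq mult_1 power_add power_mult power_one)
    finally show "x \<in> (\<lambda>j. \<alpha> ^ j) ` {..<d}" using assms(2) by simp
  qed
  then have "card (UNIV - {0 :: 'a}) \<le> card ((\<lambda>j. \<alpha> ^ j) ` {..<d})"
    by (intro card_mono) simp_all
  also have "\<dots> \<le> d" using card_image_le[of "{..<d}" "\<lambda>j. \<alpha> ^ j"] by simp
  finally show ?thesis by (simp only: card_nonzero)
qed

lemma primitive_elem_powi_eq:
  fixes \<alpha> :: "'a::{finite,field}"
  assumes "primitive_elem \<alpha>" and "\<bar>m - m'\<bar> < int (CARD('a) - 1)" and "\<alpha> powi m = \<alpha> powi m'"
  shows "m = m'"
proof (rule ccontr)
  have "\<alpha> \<noteq> 0" using assms(1) by (rule primitive_elem_nonzero)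
  have wlog: False if "m < m'" "m' - m < int (CARD('a) - 1)" "\<alpha> powi m = \<alpha> powi m'"
    for m m' :: int
  proof -
    have "\<alpha> powi m' = \<alpha> powi m * \<alpha> ^ nat (m' - m)"
      using \<open>\<alpha> \<noteq> 0\<close> that(1) by (simp flip: power_int_add power_int_of_nat)
    then have "\<alpha> ^ nat (m' - m) = 1"
      using that(3) \<open>\<alpha> \<noteq> 0\<close> by (simp add: power_int_eq_0_iff)
    from primitive_elem_order[OF assms(1) _ this] that(1,2) show False by linarith
  qed
  assume "m \<noteq> m'"
  then show False
    using wlog[of m m'] wlog[of m' m] assms by (cases "m < m'") auto
qed

lemma primitive_elem_image_eq:
  fixes \<alpha> :: "'a::{finite,field}" and e :: "nat \<Rightarrow> int"
  assumes "primitive_elem \<alpha>"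
    and "\<And>j j'. j \<in> {1..CARD('a) - 1} \<Longrightarrow> j' \<in> {1..CARD('a) - 1} \<Longrightarrow> e j = e j' \<Longrightarrow> j = j'"
    and "\<And>j j'. j \<in> {1..CARD('a) - 1} \<Longrightarrow> j' \<in> {1..CARD('a) - 1} \<Longrightarrow>
           \<bar>e j - e j'\<bar> < int (CARD('a) - 1)"
  shows "(\<lambda>j. \<alpha> powi e j) ` {1..CARD('a) - 1} = UNIV - {0}"
proof (rule card_subset_eq)
  have "inj_on (\<lambda>j. \<alpha> powi e j) {1..CARD('a) - 1}"
    using assms by (intro inj_onI) (metis primitive_elem_powi_eq)
  then show "card ((\<lambda>j. \<alpha> powi e j) ` {1..CARD('a) - 1}) = card (UNIV - {0 :: 'a})"
    by (simp add: card_image card_nonzero)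
  show "(\<lambda>j. \<alpha> powi e j) ` {1..CARD('a) - 1} \<subseteq> UNIV - {0}"
    using primitive_elem_nonzero[OF assms(1)] by (auto simp: power_int_eq_0_iff)
qed simp

lemma Vvec_eq_iff:
  fixes \<alpha> :: "'a::{finite,field}" and a b :: "'a ^ 'n"
  assumes "primitive_elem \<alpha>"
  shows "Vvec \<alpha> a = Vvec \<alpha> b \<longleftrightarrow> (\<forall>x\<in>UNIV - {0}. cnt a x = cnt b x)"
proof -
  have "(\<lambda>j. \<alpha> powi int j) ` {1..CARD('a) - 1} = UNIV - {0}"
    by (rule primitive_elem_image_eq[OF assms]) auto
  then have nonzero: "(\<lambda>j. \<alpha> ^ j) ` {1..CARD('a) - 1} = UNIV - {0}"
    by (simp add: power_int_of_nat)
  have "Vvec \<alpha> a = Vvec \<alpha> b \<longleftrightarrow>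
      (\<forall>x\<in>UNIV - {0}. cnt a x = cnt b x) \<and> cnt a 0 = cnt b 0"
    unfolding Vvec_def nonzero[symmetric] by (auto simp: map_eq_conv)
  moreover have "cnt a 0 = cnt b 0" if "\<forall>x\<in>UNIV - {0}. cnt a x = cnt b x"
    unfolding cnt_zero_eq[of a] cnt_zero_eq[of b] using that by (metis sum.cong)
  ultimately show ?thesis by blast
qed

lemma separating_weights_iff_cnt_separates:
  fixes C :: "('a ^ 'n) set" and f :: "nat \<Rightarrow> 'a"
  assumes "1 \<le> m"
  shows "(\<exists>r :: nat \<Rightarrow> nat. (\<exists>j\<in>{1..m}. r j \<noteq> 0) \<and>
            (\<forall>a\<in>C. \<forall>b\<in>C. a \<noteq> b \<longrightarrow>
               (\<Sum>j = 1..m. int (r j) * (int (cnt a (f j)) - int (cnt b (f j)))) \<noteq> 0))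
         \<longleftrightarrow> (\<forall>a\<in>C. \<forall>b\<in>C. a \<noteq> b \<longrightarrow> (\<exists>j\<in>{1..m}. cnt a (f j) \<noteq> cnt b (f j)))"
proof
  assume "\<exists>r :: nat \<Rightarrow> nat. (\<exists>j\<in>{1..m}. r j \<noteq> 0) \<and> (\<forall>a\<in>C. \<forall>b\<in>C. a \<noteq> b \<longrightarrow>
      (\<Sum>j = 1..m. int (r j) * (int (cnt a (f j)) - int (cnt b (f j)))) \<noteq> 0)"
  then obtain r :: "nat \<Rightarrow> nat" where r: "\<forall>a\<in>C. \<forall>b\<in>C. a \<noteq> b \<longrightarrow>
      (\<Sum>j = 1..m. int (r j) * (int (cnt a (f j)) - int (cnt b (f j)))) \<noteq> 0"
    by blast
  show "\<forall>a\<in>C. \<forall>b\<in>C. a \<noteq> b \<longrightarrow> (\<exists>j\<in>{1..m}. cnt a (f j) \<noteq> cnt b (f j))"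
  proof (intro ballI impI)
    fix a b assume "a \<in> C" "b \<in> C" "a \<noteq> b"
    with r have weighted_nonzero:
      "(\<Sum>j = 1..m. int (r j) * (int (cnt a (f j)) - int (cnt b (f j)))) \<noteq> 0"
      by blast
    show "\<exists>j\<in>{1..m}. cnt a (f j) \<noteq> cnt b (f j)"
    proof (rule ccontr)
      assume "\<not> (\<exists>j\<in>{1..m}. cnt a (f j) \<noteq> cnt b (f j))"
      then have "(\<Sum>j = 1..m. int (r j) * (int (cnt a (f j)) - int (cnt b (f j)))) = 0"
        by (intro sum.neutral) simp
      with weighted_nonzero show False by contradiction
    qed
  qed
next
  assume separates: "\<forall>a\<in>C. \<forall>b\<in>C. a \<noteq> b \<longrightarrow> (\<exists>j\<in>{1..m}. cnt a (f j) \<noteq> cnt b (f j))"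
  show "\<exists>r :: nat \<Rightarrow> nat. (\<exists>j\<in>{1..m}. r j \<noteq> 0) \<and> (\<forall>a\<in>C. \<forall>b\<in>C. a \<noteq> b \<longrightarrow>
      (\<Sum>j = 1..m. int (r j) * (int (cnt a (f j)) - int (cnt b (f j)))) \<noteq> 0)"
  proof (intro exI[of _ "\<lambda>j. (CARD('n) + 1) ^ (j - 1)"] conjI ballI impI)
    fix a b assume "a \<in> C" "b \<in> C" "a \<noteq> b"
    with separates show "(\<Sum>j = 1..m.
        int ((CARD('n) + 1) ^ (j - 1)) * (int (cnt a (f j)) - int (cnt b (f j)))) \<noteq> 0"
      by (intro weighted_cnt_difference_nonzero) blast
  qed (use assms in auto)
qed

theorem mainTheorem5:
  fixes \<alpha> :: "'a::{finite,field}" and C :: "('a ^ 'n) set" and k i :: nat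
  assumes "primitive_elem \<alpha>"
    and "is_code k C"
    and "1 \<le> i" and "i \<le> CARD('a) - 1"
  shows "(\<exists>r :: nat \<Rightarrow> nat. (\<exists>j\<in>{1..CARD('a) - 1}. r j \<noteq> 0) \<and>
            (\<forall>a\<in>C. \<forall>b\<in>C. a \<noteq> b \<longrightarrow>
               (\<Sum>j = 1..CARD('a) - 1. int (r j) *
                  (int (cnt a (\<alpha> powi (int i - int j))) - int (cnt b (\<alpha> powi (int i - int j))))) \<noteq> 0))
         \<longleftrightarrow> (\<forall>a\<in>C. \<forall>b\<in>C. a \<noteq> b \<longrightarrow> Vvec \<alpha> a \<noteq> Vvec \<alpha> b)"
proof -
  define f where "f j = \<alpha> powi (int i - int j)" for j
  have nonzero: "f ` {1..CARD('a) - 1} = UNIV - {0}"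
    unfolding f_def by (rule primitive_elem_image_eq[OF assms(1)]) auto
  have "Vvec \<alpha> a \<noteq> Vvec \<alpha> b \<longleftrightarrow> (\<exists>j\<in>{1..CARD('a) - 1}. cnt a (f j) \<noteq> cnt b (f j))"
    for a b :: "'a ^ 'n"
    unfolding Vvec_eq_iff[OF assms(1)] nonzero[symmetric] by simp
  moreover have "1 \<le> CARD('a) - 1" using card_field_ge_2[where 'a='a] by simp
  ultimately show ?thesis
    unfolding f_def[symmetric] by (simp only: separating_weights_iff_cnt_separates)
qed

end
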